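(* Under the standing setting below, let $\alpha>0$, $C_0>0$, let $(x_0,y_0)$ satisfy $h(x_0,y_0)\le\alpha^2C_0$, take $\rho(x,y)=\|\nabla h(x,y)\|\,h(x_0,y_0)^{1/2}$, fix an integer $K\ge1$ and $\gamma=\min\{K^{-2/3},1/L_f\}$, and run the Algorithm. Define $B_\Delta=2C_f+\alpha^2\sqrt{C_0}$. Then $$\frac1K\sum_{k=0}^{K-1}\big(\|\Delta_k^x\|^2+\|\Delta_k^y\|^2\big)\le\frac{2(f_0-\bar f)}{\gamma K}+\alpha^2(B_\Delta^2+C_0),$$ and $$\frac1K\sum_{k=0}^{K-1}h_k\le\alpha^2C_0+\frac{\gamma^2L_hB_\Delta^2}{2}\cdot\frac{K-1}{2},$$ where $f_0=f(x_0,y_0)$.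
   Context: Standing setting. $f,g:\mathbb{R}^n\times\mathbb{R}^m\to\mathbb{R}$. $f$ is continuously differentiable, $\bar f:=\inf f>-\infty$, $\nabla f$ is $L_f$-Lipschitz, and $\|\nabla f\|\le C_f$ everywhere. $g$ is twice continuously differentiable, and $h(x,y):=\|\nabla_y g(x,y)\|^2$ is continuously differentiable with $\nabla h$ being $L_h$-Lipschitz ($L_h>0$). Write $\nabla h=(\nabla_x h,\nabla_y h)$, $f_k=f(x_k,y_k)$, $h_k=h(x_k,y_k)$, $\nabla f_k=\nabla f(x_k,y_k)$, $\nabla h_k=\nabla h(x_k,y_k)$, etc. Given $\rho\ge0$, $\alpha,\gamma>0$, $(x_0,y_0)$, the Algorithm iterates for $k\ge0$: $\lambda_k=\big[-\nabla_x h_k^\top\nabla_x f_k-\nabla_y h_k^\top\nabla_y f_k+\alpha\rho(x_k,y_k)\big]_+/(\|\nabla_x h_k\|^2+\|\nabla_y h_k\|^2)$ if $\nabla h_k\ne0$, $\lambda_k=0$ otherwise ($[t]_+=\max\{0,t\}$); $\Delta_k^x=-\nabla_x f_k-\lambda_k\nabla_x h_k$, $\Delta_k^y=-\nabla_y f_k-\lambda_k\nabla_y h_k$; $x_{k+1}=x_k+\gamma\Delta_k^x$, $y_{k+1}=y_k+\gamma\Delta_k^y$. *)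

theory Defs
  imports "HOL-Analysis.Analysis"
begin

text \<open>Points of R^n x R^m are pairs; a gradient G :: point => point has
  components fst (G p) = partial gradient in x, snd (G p) = partial gradient in y.\<close>

type_synonym ('n,'m) pt = "(real^'n) \<times> (real^'m)"

definition alg_lambda ::
  "(('n::finite,'m::finite) pt \<Rightarrow> ('n,'m) pt) \<Rightarrow> (('n,'m) pt \<Rightarrow> ('n,'m) pt)
   \<Rightarrow> (('n,'m) pt \<Rightarrow> real) \<Rightarrow> real \<Rightarrow> ('n,'m) pt \<Rightarrow> real" where
  "alg_lambda Gf Gh rho \<alpha> p =
     (if Gh p \<noteq> 0 then
        max 0 (- (fst (Gh p) \<bullet> fst (Gf p)) - (snd (Gh p) \<bullet> snd (Gf p)) + \<alpha> * rho p)
        / ((norm (fst (Gh p)))\<^sup>2 + (norm (snd (Gh p)))\<^sup>2)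
      else 0)"

definition alg_dir ::
  "(('n::finite,'m::finite) pt \<Rightarrow> ('n,'m) pt) \<Rightarrow> (('n,'m) pt \<Rightarrow> ('n,'m) pt)
   \<Rightarrow> (('n,'m) pt \<Rightarrow> real) \<Rightarrow> real \<Rightarrow> ('n,'m) pt \<Rightarrow> ('n,'m) pt" where
  "alg_dir Gf Gh rho \<alpha> p =
     (- fst (Gf p) - alg_lambda Gf Gh rho \<alpha> p *\<^sub>R fst (Gh p),
      - snd (Gf p) - alg_lambda Gf Gh rho \<alpha> p *\<^sub>R snd (Gh p))"

primrec alg_iter ::
  "(('n::finite,'m::finite) pt \<Rightarrow> ('n,'m) pt) \<Rightarrow> (('n,'m) pt \<Rightarrow> ('n,'m) pt)
   \<Rightarrow> (('n,'m) pt \<Rightarrow> real) \<Rightarrow> real \<Rightarrow> real \<Rightarrow> ('n,'m) pt \<Rightarrow> nat \<Rightarrow> ('n,'m) pt" where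
  "alg_iter Gf Gh rho \<alpha> \<gamma> p0 0 = p0"
| "alg_iter Gf Gh rho \<alpha> \<gamma> p0 (Suc k) =
     (let p = alg_iter Gf Gh rho \<alpha> \<gamma> p0 k
      in (fst p + \<gamma> *\<^sub>R fst (alg_dir Gf Gh rho \<alpha> p),
          snd p + \<gamma> *\<^sub>R snd (alg_dir Gf Gh rho \<alpha> p)))"

end

theory Submission
  imports Defs
begin

(*
  The direction \<Delta> = -\<nabla>f - \<lambda>\<nabla>h uses the least \<lambda> \<ge> 0 with \<nabla>h\<cdot>\<Delta> \<le> -\<alpha> s |\<nabla>h|, where
  s = h(x0,y0)^(1/2).  Hence \<nabla>h\<cdot>\<Delta> \<le> 0 and |\<Delta>| \<le> 2|\<nabla>f| + \<alpha> s \<le> B_\<Delta>, so the descent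
  lemma for the L_h-smooth h gives h_(k+1) \<le> h_k + L_h \<gamma>^2 B_\<Delta>^2 / 2: h grows at most
  linearly along the iterates, and averaging gives the second bound.
  For f, \<nabla>f\<cdot>\<Delta> = -|\<Delta>|^2 - \<lambda> \<nabla>h\<cdot>\<Delta>, and the correction -\<lambda> \<nabla>h\<cdot>\<Delta> is either 0 or
  \<alpha> s \<lambda> |\<nabla>h| \<le> \<alpha> s (|\<nabla>f| + \<alpha> s).  With \<gamma> L_f \<le> 1 the descent lemma for f gives
  f_(k+1) \<le> f_k - \<gamma> |\<Delta>_k|^2 / 2 + \<gamma> \<alpha> s (C_f + \<alpha> s), and telescoping against inf f
  gives the first bound.
*)

lemma descent_lemma:
  fixes f :: "'a::real_inner \<Rightarrow> real"
  assumes grad: "\<And>p. (f has_derivative (\<lambda>d. G p \<bullet> d)) (at p)"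
    and lip: "L-lipschitz_on UNIV G"
  shows "f q \<le> f p + G p \<bullet> (q - p) + L / 2 * (norm (q - p))\<^sup>2"
proof -
  define d where "d = q - p"
  define \<phi> where "\<phi> t = f (p + t *\<^sub>R d) - t * (G p \<bullet> d) - L / 2 * t\<^sup>2 * (norm d)\<^sup>2" for t
  have "\<phi> 1 \<le> \<phi> 0"
  proof (rule DERIV_nonpos_imp_nonincreasing[of 0 1])
    fix t :: real assume t: "0 \<le> t" "t \<le> 1"
    have "((\<lambda>t. p + t *\<^sub>R d) has_derivative (\<lambda>s. s *\<^sub>R d)) (at t)"
      by (auto intro!: derivative_eq_intros)
    from has_derivative_compose[OF this grad]
    have "((\<lambda>t. f (p + t *\<^sub>R d)) has_real_derivative (G (p + t *\<^sub>R d) \<bullet> d)) (at t)"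
      by (simp add: has_field_derivative_def mult.commute[of _ "G _ \<bullet> d"])
    then have "(\<phi> has_real_derivative (G (p + t *\<^sub>R d) - G p) \<bullet> d - L * t * (norm d)\<^sup>2) (at t)"
      unfolding \<phi>_def by (auto intro!: derivative_eq_intros simp: inner_diff_left)
    moreover have "(G (p + t *\<^sub>R d) - G p) \<bullet> d \<le> L * t * (norm d)\<^sup>2"
    proof -
      have "(G (p + t *\<^sub>R d) - G p) \<bullet> d \<le> norm (G (p + t *\<^sub>R d) - G p) * norm d"
        by (rule norm_cauchy_schwarz)
      also have "\<dots> \<le> L * norm (t *\<^sub>R d) * norm d"
        using lipschitz_onD[OF lip, of "p + t *\<^sub>R d" p]
        by (intro mult_right_mono) (auto simp: dist_norm)
      finally show ?thesis using t by (simp add: power2_eq_square mult.assoc)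
    qed
    ultimately show "\<exists>y. (\<phi> has_real_derivative y) (at t) \<and> y \<le> 0"
      by (metis diff_le_0_iff_le)
  qed simp
  then show ?thesis unfolding \<phi>_def d_def by simp
qed

lemma mean_le_of_sufficient_decrease:
  fixes a b :: "nat \<Rightarrow> real"
  assumes step: "\<And>k. a (Suc k) \<le> a k - \<gamma> / 2 * b k + \<gamma> * e"
    and lower: "\<And>k. m \<le> a k" and "\<gamma> > 0" "K > 0"
  shows "(1 / real K) * (\<Sum>k<K. b k) \<le> 2 * (a 0 - m) / (\<gamma> * real K) + 2 * e"
proof -
  have "\<gamma> / 2 * b k \<le> a k - a (Suc k) + \<gamma> * e" for k
    using step[of k] by linarith
  then have "(\<Sum>k<K. \<gamma> / 2 * b k) \<le> (\<Sum>k<K. a k - a (Suc k) + \<gamma> * e)"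
    by (rule sum_mono)
  also have "\<dots> = a 0 - a K + real K * (\<gamma> * e)"
    by (simp add: sum.distrib sum_lessThan_telescope')
  finally have "\<gamma> / 2 * (\<Sum>k<K. b k) \<le> a 0 - m + real K * (\<gamma> * e)"
    using lower[of K] by (simp add: sum_distrib_left)
  with assms(3,4) show ?thesis
    by (simp add: field_simps)
qed

lemma mean_le_of_bounded_increments:
  fixes a :: "nat \<Rightarrow> real"
  assumes step: "\<And>k. a (Suc k) \<le> a k + d" and "K > 0"
  shows "(1 / real K) * (\<Sum>k<K. a k) \<le> a 0 + d * ((real K - 1) / 2)"
proof -
  have bound: "a k \<le> a 0 + real k * d" for k
  proof (induction k)
    case (Suc k)
    then show ?case using step[of k] by (simp add: distrib_right)
  qed simp
  have "(\<Sum>k<K. a k) \<le> (\<Sum>k<K. a 0 + real k * d)"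
    using bound by (rule sum_mono)
  also have "\<dots> = real K * a 0 + d * (\<Sum>k<K. real k)"
    by (simp add: sum.distrib sum_distrib_left mult.commute)
  also have "(\<Sum>k<K. real k) = real K * (real K - 1) / 2"
    by (induction K) (auto simp: field_simps)
  finally show ?thesis
    using \<open>K > 0\<close> by (simp add: field_simps)
qed

text \<open>With \<open>\<rho>(p) = |\<nabla>h(p)| s\<close>, the multiplier \<open>\<lambda>\<^sub>k\<close> and direction \<open>\<Delta>\<^sub>k\<close> of the Algorithm are
  \<open>constrained_multiplier (\<alpha> s)\<close> and \<open>constrained_dir (\<alpha> s)\<close> evaluated at \<open>(\<nabla>f, \<nabla>h)\<close>.\<close>

definition constrained_multiplier :: "real \<Rightarrow> 'a::real_inner \<Rightarrow> 'a \<Rightarrow> real" where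
  "constrained_multiplier c gf gh =
     (if gh \<noteq> 0 then max 0 (c * norm gh - gh \<bullet> gf) / (norm gh)\<^sup>2 else 0)"

definition constrained_dir :: "real \<Rightarrow> 'a::real_inner \<Rightarrow> 'a \<Rightarrow> 'a" where
  "constrained_dir c gf gh = - gf - constrained_multiplier c gf gh *\<^sub>R gh"

lemma constrained_multiplier_nonneg: "constrained_multiplier c gf gh \<ge> 0"
  by (simp add: constrained_multiplier_def)

lemma constrained_multiplier_mult_norm_le:
  assumes "c \<ge> 0"
  shows "constrained_multiplier c gf gh * norm gh \<le> norm gf + c"
proof (cases "gh = 0")
  case False
  have "max 0 (c * norm gh - gh \<bullet> gf) \<le> (norm gf + c) * norm gh"
    using assms Cauchy_Schwarz_ineq2[of gh gf] by (auto simp: algebra_simps)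
  then show ?thesis
    using False by (simp add: constrained_multiplier_def power2_eq_square divide_le_eq)
qed (simp add: constrained_multiplier_def assms)

lemma inner_constrained_dir:
  "gh \<bullet> constrained_dir c gf gh = - (gh \<bullet> gf) - constrained_multiplier c gf gh * (norm gh)\<^sup>2"
  by (simp add: constrained_dir_def inner_diff_right power2_norm_eq_inner)

lemma inner_constrained_dir_active:
  assumes "constrained_multiplier c gf gh \<noteq> 0"
  shows "gh \<bullet> constrained_dir c gf gh = - c * norm gh"
proof -
  from assms have "gh \<noteq> 0" and "c * norm gh - gh \<bullet> gf > 0"
    by (auto simp: constrained_multiplier_def split: if_splits)
  then show ?thesis
    by (simp add: inner_constrained_dir constrained_multiplier_def)
qed

lemma inner_constrained_dir_le: "gh \<bullet> constrained_dir c gf gh \<le> - c * norm gh"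
proof (cases "gh = 0")
  case False
  then show ?thesis
    by (simp add: inner_constrained_dir constrained_multiplier_def)
qed (simp add: constrained_dir_def)

lemma norm_constrained_dir_le:
  assumes "c \<ge> 0"
  shows "norm (constrained_dir c gf gh) \<le> 2 * norm gf + c"
proof -
  have "norm (constrained_dir c gf gh) \<le> norm gf + constrained_multiplier c gf gh * norm gh"
    unfolding constrained_dir_def using constrained_multiplier_nonneg[of c gf gh]
    by (metis abs_of_nonneg norm_minus_cancel norm_scaleR norm_triangle_ineq4)
  then show ?thesis
    using constrained_multiplier_mult_norm_le[OF assms, of gf gh] by simp
qed

lemma inner_grad_constrained_dir_le:
  fixes gf gh :: "'a::real_inner"
  assumes "c \<ge> 0"
  defines "D \<equiv> constrained_dir c gf gh"
  shows "gf \<bullet> D \<le> - (norm D)\<^sup>2 + c * (norm gf + c)"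
proof -
  let ?\<mu> = "constrained_multiplier c gf gh"
  have "gf \<bullet> D = (- D - ?\<mu> *\<^sub>R gh) \<bullet> D"
    by (simp add: D_def constrained_dir_def)
  also have "\<dots> = - (norm D)\<^sup>2 - ?\<mu> * (gh \<bullet> D)"
    by (simp add: inner_diff_left power2_norm_eq_inner)
  finally have "gf \<bullet> D = - (norm D)\<^sup>2 - ?\<mu> * (gh \<bullet> D)" .
  moreover have "- ?\<mu> * (gh \<bullet> D) \<le> c * (norm gf + c)"
  proof (cases "?\<mu> = 0")
    case True
    then show ?thesis using assms by simp
  next
    case False
    then have "- ?\<mu> * (gh \<bullet> D) = c * (?\<mu> * norm gh)"
      by (simp add: D_def inner_constrained_dir_active)
    also have "\<dots> \<le> c * (norm gf + c)"
      using assms constrained_multiplier_mult_norm_le by (intro mult_left_mono)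
    finally show ?thesis .
  qed
  ultimately show ?thesis by linarith
qed

lemma descent_step_constrained_dir:
  fixes f :: "'a::real_inner \<Rightarrow> real" and p gh :: 'a
  assumes grad: "\<And>p. (f has_derivative (\<lambda>d. G p \<bullet> d)) (at p)"
    and lip: "L-lipschitz_on UNIV G"
    and "\<gamma> > 0" "\<gamma> * L \<le> 1" "c \<ge> 0"
  defines "D \<equiv> constrained_dir c (G p) gh"
  shows "f (p + \<gamma> *\<^sub>R D) \<le> f p - \<gamma> / 2 * (norm D)\<^sup>2 + \<gamma> * (c * (norm (G p) + c))"
proof -
  have "f (p + \<gamma> *\<^sub>R D) \<le> f p + \<gamma> * (G p \<bullet> D) + (\<gamma> * L) * (\<gamma> / 2) * (norm D)\<^sup>2"
    using descent_lemma[OF grad lip, of "p + \<gamma> *\<^sub>R D" p] \<open>\<gamma> > 0\<close>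
    by (simp add: power_mult_distrib power2_eq_square mult_ac)
  also have "\<dots> \<le> f p + \<gamma> * (- (norm D)\<^sup>2 + c * (norm (G p) + c)) + 1 * (\<gamma> / 2) * (norm D)\<^sup>2"
    using inner_grad_constrained_dir_le[OF \<open>c \<ge> 0\<close>, of "G p" gh] assms(3,4)
    unfolding D_def by (intro add_mono mult_left_mono mult_right_mono) auto
  finally show ?thesis by (simp add: algebra_simps)
qed

lemma growth_step_constrained_dir:
  fixes h :: "'a::real_inner \<Rightarrow> real"
  assumes grad: "\<And>p. (h has_derivative (\<lambda>d. G p \<bullet> d)) (at p)"
    and lip: "L-lipschitz_on UNIV G"
    and "\<gamma> \<ge> 0" "c \<ge> 0"
  shows "h (p + \<gamma> *\<^sub>R constrained_dir c gf (G p)) \<le> h p + L / 2 * \<gamma>\<^sup>2 * (2 * norm gf + c)\<^sup>2"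
proof -
  let ?D = "constrained_dir c gf (G p)"
  have "h (p + \<gamma> *\<^sub>R ?D) \<le> h p + \<gamma> * (G p \<bullet> ?D) + L / 2 * \<gamma>\<^sup>2 * (norm ?D)\<^sup>2"
    using descent_lemma[OF grad lip, of "p + \<gamma> *\<^sub>R ?D" p] \<open>\<gamma> \<ge> 0\<close>
    by (simp add: power_mult_distrib)
  also have "\<dots> \<le> h p + 0 + L / 2 * \<gamma>\<^sup>2 * (2 * norm gf + c)\<^sup>2"
  proof (intro add_mono mult_left_mono)
    have "G p \<bullet> ?D \<le> 0"
      using inner_constrained_dir_le[of "G p" c gf] mult_nonneg_nonneg[OF \<open>c \<ge> 0\<close> norm_ge_zero[of "G p"]]
      by simp
    then show "\<gamma> * (G p \<bullet> ?D) \<le> 0"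
      using \<open>\<gamma> \<ge> 0\<close> by (rule mult_nonneg_nonpos[rotated])
    show "(norm ?D)\<^sup>2 \<le> (2 * norm gf + c)\<^sup>2"
      using norm_constrained_dir_le[OF \<open>c \<ge> 0\<close>] by (intro power_mono) auto
    show "0 \<le> L / 2 * \<gamma>\<^sup>2"
      using lipschitz_on_nonneg[OF lip] by simp
  qed simp
  finally show ?thesis by simp
qed

lemma constrained_iteration_mean_sq_dir_le:
  fixes f :: "'a::real_inner \<Rightarrow> real" and z :: "nat \<Rightarrow> 'a"
  assumes grad: "\<And>p. (f has_derivative (\<lambda>d. Gf p \<bullet> d)) (at p)"
    and lip: "L-lipschitz_on UNIV Gf"
    and bnd: "\<And>p. norm (Gf p) \<le> C"
    and bdd: "bdd_below (range f)"
    and \<gamma>: "0 < \<gamma>" "\<gamma> * L \<le> 1"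
    and "0 \<le> c" "0 < K"
    and z_Suc: "\<And>k. z (Suc k) = z k + \<gamma> *\<^sub>R constrained_dir c (Gf (z k)) (Gh (z k))"
  shows "(1 / real K) * (\<Sum>k<K. (norm (constrained_dir c (Gf (z k)) (Gh (z k))))\<^sup>2)
    \<le> 2 * (f (z 0) - (INF p. f p)) / (\<gamma> * real K) + 2 * (c * (C + c))"
proof -
  have step: "f (z (Suc k)) \<le> f (z k) - \<gamma> / 2 * (norm (constrained_dir c (Gf (z k)) (Gh (z k))))\<^sup>2
      + \<gamma> * (c * (C + c))" for k
  proof -
    have "\<gamma> * (c * (norm (Gf (z k)) + c)) \<le> \<gamma> * (c * (C + c))"
      using bnd[of "z k"] \<gamma> \<open>0 \<le> c\<close> by (simp add: mult_left_mono)
    then show ?thesis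
      using descent_step_constrained_dir[OF grad lip \<gamma> \<open>0 \<le> c\<close>, of "z k" "Gh (z k)"]
      unfolding z_Suc by linarith
  qed
  show ?thesis
    by (rule mean_le_of_sufficient_decrease[where a="\<lambda>k. f (z k)", OF step]) (use bdd \<gamma> \<open>0 < K\<close> in \<open>auto intro: cINF_lower\<close>)
qed

lemma constrained_iteration_mean_le:
  fixes h :: "'a::real_inner \<Rightarrow> real" and z :: "nat \<Rightarrow> 'a"
  assumes grad: "\<And>p. (h has_derivative (\<lambda>d. Gh p \<bullet> d)) (at p)"
    and lip: "L-lipschitz_on UNIV Gh"
    and bnd: "\<And>p. 2 * norm (Gf p) + c \<le> B"
    and "0 \<le> \<gamma>" "0 \<le> c" "0 < K"
    and z_Suc: "\<And>k. z (Suc k) = z k + \<gamma> *\<^sub>R constrained_dir c (Gf (z k)) (Gh (z k))"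
  shows "(1 / real K) * (\<Sum>k<K. h (z k)) \<le> h (z 0) + \<gamma>\<^sup>2 * L * B\<^sup>2 / 2 * ((real K - 1) / 2)"
proof -
  have step: "h (z (Suc k)) \<le> h (z k) + L / 2 * \<gamma>\<^sup>2 * B\<^sup>2" for k
  proof -
    have "(2 * norm (Gf (z k)) + c)\<^sup>2 \<le> B\<^sup>2"
      using bnd[of "z k"] \<open>0 \<le> c\<close> by (intro power_mono) auto
    then have "L / 2 * \<gamma>\<^sup>2 * (2 * norm (Gf (z k)) + c)\<^sup>2 \<le> L / 2 * \<gamma>\<^sup>2 * B\<^sup>2"
      using lipschitz_on_nonneg[OF lip] by (intro mult_left_mono) auto
    with growth_step_constrained_dir[OF grad lip \<open>0 \<le> \<gamma>\<close> \<open>0 \<le> c\<close>, of "z k" "Gf (z k)"]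
    show ?thesis unfolding z_Suc by simp
  qed
  show ?thesis
    using mean_le_of_bounded_increments[where a="\<lambda>k. h (z k)", OF step \<open>0 < K\<close>]
    by (simp add: mult_ac)
qed

lemma bias_le_square_bound:
  fixes a c C u :: real
  assumes "0 \<le> a" "0 \<le> C" "0 \<le> u" "0 \<le> c" "c \<le> a * u"
  shows "2 * (c * (C + c)) \<le> a * ((2 * C + a * u)\<^sup>2 + u\<^sup>2)"
proof -
  have "2 * (c * (C + c)) \<le> 2 * (a * u * (C + a * u))"
    using assms by (intro mult_left_mono mult_mono add_left_mono) auto
  also have "\<dots> = a * (2 * C * u + 2 * a * u\<^sup>2)"
    by (simp add: power2_eq_square algebra_simps)
  also have "\<dots> \<le> a * ((2 * C + a * u)\<^sup>2 + u\<^sup>2)"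
  proof (rule mult_left_mono[OF _ \<open>0 \<le> a\<close>])
    have "0 \<le> (2 * C + (a - 1) * u)\<^sup>2 + 2 * C * u"
      using assms by simp
    then show "2 * C * u + 2 * a * u\<^sup>2 \<le> (2 * C + a * u)\<^sup>2 + u\<^sup>2"
      by (simp add: power2_eq_square algebra_simps)
  qed
  finally show ?thesis .
qed

lemma power2_norm_prod: "(norm (fst x))\<^sup>2 + (norm (snd x))\<^sup>2 = (norm x)\<^sup>2"
  by (simp add: norm_prod_def)

lemma alg_iter_Suc_eq:
  "alg_iter Gf Gh rho \<alpha> \<gamma> p0 (Suc k)
     = alg_iter Gf Gh rho \<alpha> \<gamma> p0 k + \<gamma> *\<^sub>R alg_dir Gf Gh rho \<alpha> (alg_iter Gf Gh rho \<alpha> \<gamma> p0 k)"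
  by (simp add: Let_def prod_eq_iff)

lemma alg_dir_eq_constrained_dir:
  "alg_dir Gf Gh (\<lambda>p. norm (Gh p) * s) \<alpha> p = constrained_dir (\<alpha> * s) (Gf p) (Gh p)"
proof -
  have "alg_lambda Gf Gh (\<lambda>p. norm (Gh p) * s) \<alpha> p = constrained_multiplier (\<alpha> * s) (Gf p) (Gh p)"
    by (simp add: alg_lambda_def constrained_multiplier_def inner_prod_def power2_norm_prod
        inner_commute algebra_simps)
  then show ?thesis
    by (simp add: alg_dir_def constrained_dir_def prod_eq_iff)
qed

theorem theorem2:
  fixes f g h :: "(real^'n) \<times> (real^'m) \<Rightarrow> real"
    and Gf Gg Gh :: "(real^'n) \<times> (real^'m) \<Rightarrow> (real^'n) \<times> (real^'m)"
    and Hg :: "(real^'n) \<times> (real^'m) \<Rightarrow> ((real^'n) \<times> (real^'m)) \<Rightarrow>\<^sub>L ((real^'n) \<times> (real^'m))"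
    and L_f C_f L_h \<alpha> C\<^sub>0 :: real
    and x0 :: "real^'n" and y0 :: "real^'m"
    and K :: nat
  assumes f_grad: "\<And>p. (f has_derivative (\<lambda>d. Gf p \<bullet> d)) (at p)"
    and f_C1: "continuous_on UNIV Gf"
    and f_bdd: "bdd_below (range f)"
    and Lf_pos: "L_f > 0"
    and Gf_lip: "L_f-lipschitz_on UNIV Gf"
    and Gf_bd: "\<And>p. norm (Gf p) \<le> C_f"
    and g_grad: "\<And>p. (g has_derivative (\<lambda>d. Gg p \<bullet> d)) (at p)"
    and g_hess: "\<And>p. (Gg has_derivative blinfun_apply (Hg p)) (at p)"
    and g_C2: "continuous_on UNIV Hg"
    and h_def: "\<And>p. h p = (norm (snd (Gg p)))\<^sup>2"
    and h_grad: "\<And>p. (h has_derivative (\<lambda>d. Gh p \<bullet> d)) (at p)"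
    and h_C1: "continuous_on UNIV Gh"
    and Lh_pos: "L_h > 0"
    and Gh_lip: "L_h-lipschitz_on UNIV Gh"
    and alpha_pos: "\<alpha> > 0"
    and C0_pos: "C\<^sub>0 > 0"
    and init: "h (x0, y0) \<le> \<alpha>\<^sup>2 * C\<^sub>0"
    and K_ge: "K \<ge> 1"
  shows
    "let rho = (\<lambda>p. norm (Gh p) * sqrt (h (x0, y0)));
         \<gamma> = min (real K powr (-2/3)) (1 / L_f);
         z = alg_iter Gf Gh rho \<alpha> \<gamma> (x0, y0);
         \<Delta> = (\<lambda>k. alg_dir Gf Gh rho \<alpha> (z k));
         B\<^sub>\<Delta> = 2 * C_f + \<alpha>\<^sup>2 * sqrt C\<^sub>0;
         fbar = (INF p. f p)
     in (1 / real K) * (\<Sum>k<K. (norm (fst (\<Delta> k)))\<^sup>2 + (norm (snd (\<Delta> k)))\<^sup>2)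
          \<le> 2 * (f (x0, y0) - fbar) / (\<gamma> * real K) + \<alpha>\<^sup>2 * (B\<^sub>\<Delta>\<^sup>2 + C\<^sub>0)
      \<and> (1 / real K) * (\<Sum>k<K. h (z k))
          \<le> \<alpha>\<^sup>2 * C\<^sub>0 + \<gamma>\<^sup>2 * L_h * B\<^sub>\<Delta>\<^sup>2 / 2 * ((real K - 1) / 2)"
proof -
  define s where "s = sqrt (h (x0, y0))"
  define \<gamma> where "\<gamma> = min (real K powr (-2/3)) (1 / L_f)"
  define z where "z = alg_iter Gf Gh (\<lambda>p. norm (Gh p) * s) \<alpha> \<gamma> (x0, y0)"
  define B where "B = 2 * C_f + \<alpha>\<^sup>2 * sqrt C\<^sub>0"
  have "s \<le> \<alpha> * sqrt C\<^sub>0"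
    using real_sqrt_le_mono[OF init] alpha_pos by (simp add: s_def real_sqrt_mult)
  then have s: "0 \<le> \<alpha> * s" "\<alpha> * s \<le> \<alpha>\<^sup>2 * sqrt C\<^sub>0"
    using alpha_pos by (auto simp: s_def h_def power2_eq_square)
  have "0 < \<gamma>" "\<gamma> \<le> 1 / L_f"
    using Lf_pos K_ge by (auto simp: \<gamma>_def)
  then have \<gamma>: "0 < \<gamma>" "\<gamma> * L_f \<le> 1"
    using Lf_pos by (auto simp: le_divide_eq)
  have Cf_nonneg: "0 \<le> C_f"
    using Gf_bd norm_ge_zero order_trans by blast
  have z_Suc: "z (Suc k) = z k + \<gamma> *\<^sub>R constrained_dir (\<alpha> * s) (Gf (z k)) (Gh (z k))" for k
    by (simp add: z_def alg_iter_Suc_eq alg_dir_eq_constrained_dir del: alg_iter.simps)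
  have dir_bound: "2 * norm (Gf p) + \<alpha> * s \<le> B" for p
    using Gf_bd[of p] s(2) by (simp add: B_def)
  have bias: "2 * (\<alpha> * s * (C_f + \<alpha> * s)) \<le> \<alpha>\<^sup>2 * (B\<^sup>2 + C\<^sub>0)"
    using bias_le_square_bound[of "\<alpha>\<^sup>2" C_f "sqrt C\<^sub>0" "\<alpha> * s"] s Cf_nonneg C0_pos
    by (simp add: B_def mult.assoc)
  note mean_dir = constrained_iteration_mean_sq_dir_le[where z=z and K=K,
      OF f_grad Gf_lip Gf_bd f_bdd \<gamma> s(1) _ z_Suc]
  note mean_h = constrained_iteration_mean_le[where z=z and K=K and \<gamma>=\<gamma>,
      OF h_grad Gh_lip dir_bound _ s(1) _ z_Suc]
  show ?thesis
    unfolding Let_def s_def[symmetric] \<gamma>_def[symmetric] z_def[symmetric] B_def[symmetric]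
    using mean_dir mean_h bias K_ge init \<gamma>(1)
    by (simp add: z_def power2_norm_prod alg_dir_eq_constrained_dir)
qed

end
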